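(* Let $\varepsilon>0$ be a given security threshold (written $\mathsf{negl}(\lambda)$ in the paper) and let $\eta\in\mathbb{Z}^+$ satisfy $1/\eta<\varepsilon$. In the setting described in the context (with $M_o$ strictly positive definite), if \[ \frac{1}{\eta^2}\,\big\|M_c''\,(M_o')^{-1}\,M_c''\big\|\;\le\;\frac14\,\lambda_{\min}(M_o'), \] then both $M_f^{(0)}$ and $M_f^{(1)}$ are density matrices (Hermitian, positive semidefinite, trace one).
   Context: Let $d_1\ge d_2\ge 1$ be integers, $\mathcal H_M=(\mathbb C^2)^{\otimes d_1}$, $\mathcal H_{M_c}=(\mathbb C^2)^{\otimes d_2}$. For $n\ge 1$ and $k\in\{0,1\}^{2n}$ let $U_k=\bigotimes_{j=1}^{n}X^{k_{2j-1}}Z^{k_{2j}}$, where $X,Z$ are the Pauli matrices (quantum one-time pad). Let $M_o$ be a strictly positive definite density matrix on $\mathcal H_M$ and $M_c$ a density matrix on $\mathcal H_{M_c}$. For keys $k\in\{0,1\}^{2d_1}$, $k'\in\{0,1\}^{2d_2}$ put $M_o'=U_kM_oU_k^\dagger$ and $M_c'=U_{k'}M_cU_{k'}^\dagger$. Let $V:\mathcal H_{M_c}\to\mathcal H_M$ be the isometry $V|\psi\rangle=|\psi\rangle\otimes|0\rangle^{\otimes(d_1-d_2)}$ and $M_c''=VM_c'V^\dagger$. On $\mathbb C^2\otimes\mathcal H_M$ (block form with respect to the computational basis of the first, control, qubit) define \[ M_a^{(0)}=\begin{pmatrix}\tfrac12M_o'&0\\0&\tfrac12M_o'\end{pmatrix},\qquad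 M_a^{(1)}=\begin{pmatrix}\tfrac12M_o'&\tfrac1\eta M_c''\\ \tfrac1\eta (M_c'')^\dagger&\tfrac12M_o'\end{pmatrix}. \] For a $2^{d_1+1}\times2^{d_1+1}$ permutation matrix $U_\sigma$ let $M_f^{(b)}=U_\sigma M_a^{(b)}U_\sigma^\dagger$ for $b\in\{0,1\}$. Here $\|\cdot\|$ is the operator norm and $\lambda_{\min}$ the smallest eigenvalue. *)

theory Defs
  imports "Jordan_Normal_Form.Matrix" "Jordan_Normal_Form.Char_Poly"
    "HOL-Combinatorics.Permutations"
begin

definition adj :: "complex mat \<Rightarrow> complex mat" where
  "adj A = mat (dim_col A) (dim_row A) (\<lambda>(i,j). cnj (A $$ (j,i)))"

definition mtrace :: "complex mat \<Rightarrow> complex" where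
  "mtrace A = (\<Sum>i<dim_row A. A $$ (i,i))"

definition hermitian :: "complex mat \<Rightarrow> bool" where
  "hermitian A \<longleftrightarrow> square_mat A \<and> adj A = A"

definition qform :: "complex mat \<Rightarrow> complex vec \<Rightarrow> complex" where
  "qform A v = (\<Sum>i<dim_vec v. cnj (v $ i) * (A *\<^sub>v v) $ i)"

definition psd :: "complex mat \<Rightarrow> bool" where
  "psd A \<longleftrightarrow> hermitian A \<and>
     (\<forall>v \<in> carrier_vec (dim_row A). Im (qform A v) = 0 \<and> Re (qform A v) \<ge> 0)"

definition strictly_pd :: "complex mat \<Rightarrow> bool" where
  "strictly_pd A \<longleftrightarrow> hermitian A \<and>
     (\<forall>v \<in> carrier_vec (dim_row A). v \<noteq> 0\<^sub>v (dim_row A) \<longrightarrow>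
        Im (qform A v) = 0 \<and> Re (qform A v) > 0)"

definition density_matrix :: "nat \<Rightarrow> complex mat \<Rightarrow> bool" where
  "density_matrix n A \<longleftrightarrow> A \<in> carrier_mat n n \<and> hermitian A \<and> psd A \<and> mtrace A = 1"

definition mat_inv :: "complex mat \<Rightarrow> complex mat" where
  "mat_inv A = (SOME B. B \<in> carrier_mat (dim_row A) (dim_row A) \<and>
                   inverts_mat A B \<and> inverts_mat B A)"

definition vnorm :: "complex vec \<Rightarrow> real" where
  "vnorm v = sqrt (\<Sum>i<dim_vec v. (cmod (v $ i))\<^sup>2)"

definition op_norm :: "complex mat \<Rightarrow> real" where
  "op_norm A = Sup {vnorm (A *\<^sub>v v) | v. v \<in> carrier_vec (dim_col A) \<and> vnorm v \<le> 1}"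

(* smallest eigenvalue (the matrices it is applied to are Hermitian, so eigenvalues are real) *)
definition lambda_min :: "complex mat \<Rightarrow> real" where
  "lambda_min A = Min (Re ` {e. eigenvalue A e})"

definition kron :: "complex mat \<Rightarrow> complex mat \<Rightarrow> complex mat" where
  "kron A B = mat (dim_row A * dim_row B) (dim_col A * dim_col B)
     (\<lambda>(i,j). A $$ (i div dim_row B, j div dim_col B) * B $$ (i mod dim_row B, j mod dim_col B))"

definition pauliX :: "complex mat" where
  "pauliX = mat 2 2 (\<lambda>(i,j). if i \<noteq> j then 1 else 0)"

definition pauliZ :: "complex mat" where
  "pauliZ = mat 2 2 (\<lambda>(i,j). if i = j then (if i = 0 then 1 else -1) else 0)"

definition pad_factor :: "bool \<Rightarrow> bool \<Rightarrow> complex mat" where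
  "pad_factor a b = (if a then pauliX else 1\<^sub>m 2) * (if b then pauliZ else 1\<^sub>m 2)"

(* U_k = X^{k_1} Z^{k_2} \<otimes> ... \<otimes> X^{k_{2n-1}} Z^{k_{2n}};
   the key k is a bit list of length 2n, 0-indexed: k!(2j), k!(2j+1) for qubit j *)
fun otp_aux :: "nat \<Rightarrow> bool list \<Rightarrow> complex mat" where
  "otp_aux 0 k = 1\<^sub>m 1"
| "otp_aux (Suc n) k = kron (otp_aux n k) (pad_factor (k ! (2*n)) (k ! (2*n+1)))"

definition otp :: "bool list \<Rightarrow> complex mat" where
  "otp k = otp_aux (length k div 2) k"

definition ket_zeros :: "nat \<Rightarrow> complex mat" where
  "ket_zeros m = mat (2^m) 1 (\<lambda>(i,j). if i = 0 then 1 else 0)"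

definition embed_iso :: "nat \<Rightarrow> nat \<Rightarrow> complex mat" where
  "embed_iso d1 d2 = kron (1\<^sub>m (2^d2)) (ket_zeros (d1 - d2))"

definition perm_mat :: "nat \<Rightarrow> (nat \<Rightarrow> nat) \<Rightarrow> complex mat" where
  "perm_mat N \<sigma> = mat N N (\<lambda>(i,j). if i = \<sigma> j then 1 else 0)"

end

theory Submission
  imports Defs
begin

(* Unitary conjugation (by the one-time pads and by the permutation) preserves Hermiticity,
   positivity, strict positivity and the trace, and conjugation by the isometry preserves
   Hermiticity. So it suffices that the block matrix [[A/2, B], [B^*, A/2]] with A = M_o' is
   positive semidefinite, for B = 0 and for B = C/eta with C = M_c''. Its form at (x, y) is
   (<x,Ax> + <y,Ay>)/2 + 2 Re <x,By>, which is nonnegative as soon as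
   4 |<x,By>|^2 <= <x,Ax> <y,Ay> (AM-GM). With u = A^-1 C y, Cauchy-Schwarz for the form of A
   gives |<x,Cy>|^2 <= <x,Ax> <u,Au>, and
   <u,Au> = <y, C A^-1 C y> <= ||C A^-1 C|| |y|^2 <= (eta^2/4) lambda_min(A) |y|^2 <= (eta^2/4) <y,Ay>
   by the hypothesis and the Rayleigh bound for the smallest eigenvalue. *)

section \<open>Adjoints, inner products and positive forms\<close>

lemma adj_carrier [simp]: "A \<in> carrier_mat r c \<Longrightarrow> adj A \<in> carrier_mat c r"
  unfolding adj_def by auto

lemma dim_adj [simp]: "dim_row (adj A) = dim_col A" "dim_col (adj A) = dim_row A"
  unfolding adj_def by auto

lemma index_adj [simp]: "i < dim_col A \<Longrightarrow> j < dim_row A \<Longrightarrow> adj A $$ (i,j) = cnj (A $$ (j,i))"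
  unfolding adj_def by auto

lemma adj_mult_vec_carrier [simp]: "A \<in> carrier_mat n m \<Longrightarrow> adj A *\<^sub>v v \<in> carrier_vec m"
  unfolding carrier_vec_def by simp

lemma adj_adj [simp]: "adj (adj A) = A"
  by (rule eq_matI) auto

lemma adj_one [simp]: "adj (1\<^sub>m n) = 1\<^sub>m n"
  by (rule eq_matI) auto

lemma adj_zero [simp]: "adj (0\<^sub>m n m) = 0\<^sub>m m n"
  by (rule eq_matI) auto

lemma adj_smult: "adj (c \<cdot>\<^sub>m A) = cnj c \<cdot>\<^sub>m adj A"
  by (rule eq_matI) auto

lemma adj_mult:
  assumes "A \<in> carrier_mat n k" "B \<in> carrier_mat k m"
  shows "adj (A * B) = adj B * adj A"
  using assms by (intro eq_matI) (auto simp: scalar_prod_def cnj_sum mult.commute)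

lemma adj_four_block_mat:
  assumes "A \<in> carrier_mat n n" "B \<in> carrier_mat n m" "C \<in> carrier_mat m n" "D \<in> carrier_mat m m"
  shows "adj (four_block_mat A B C D) = four_block_mat (adj A) (adj C) (adj B) (adj D)"
  using assms by (intro eq_matI) auto

lemma hermitian_adj: "hermitian A \<Longrightarrow> adj A = A"
  unfolding hermitian_def by simp

lemma hermitian_one: "hermitian (1\<^sub>m n)"
  unfolding hermitian_def by simp

definition cinner :: "complex vec \<Rightarrow> complex vec \<Rightarrow> complex" where
  "cinner u v = (\<Sum>i<dim_vec u. cnj (u $ i) * v $ i)"

definition sqnorm :: "complex vec \<Rightarrow> real" where
  "sqnorm v = (\<Sum>i<dim_vec v. (cmod (v $ i))\<^sup>2)"

lemma qform_cinner: "qform A v = cinner v (A *\<^sub>v v)"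
  unfolding qform_def cinner_def by simp

lemma vnorm_sqnorm: "vnorm v = sqrt (sqnorm v)"
  unfolding vnorm_def sqnorm_def by simp

lemma sqnorm_nonneg: "sqnorm v \<ge> 0"
  unfolding sqnorm_def by (auto intro: sum_nonneg)

lemma sqnorm_eq_0_iff: "v \<in> carrier_vec n \<Longrightarrow> sqnorm v = 0 \<longleftrightarrow> v = 0\<^sub>v n"
  unfolding sqnorm_def by (auto simp: sum_nonneg_eq_0_iff)

lemma sqnorm_smult: "sqnorm (c \<cdot>\<^sub>v v) = (cmod c)\<^sup>2 * sqnorm v"
  unfolding sqnorm_def by (simp add: sum_distrib_left norm_mult power_mult_distrib)

lemma sqnorm_unit_vec:
  assumes "i < n"
  shows "sqnorm (unit_vec n i) = 1"
proof -
  have "(cmod (unit_vec n i $ j))\<^sup>2 = (if j = i then 1 else 0)" if "j < n" for j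
    using that by (simp add: unit_vec_def)
  then show ?thesis unfolding sqnorm_def using assms by simp
qed

lemma cinner_self: "cinner v v = of_real (sqnorm v)"
proof -
  have "cnj z * z = of_real ((cmod z)\<^sup>2)" for z
    using complex_norm_square[of z] by (simp add: mult.commute)
  then show ?thesis
    unfolding cinner_def sqnorm_def by simp
qed

lemma cnj_cinner: "dim_vec u = dim_vec v \<Longrightarrow> cnj (cinner u v) = cinner v u"
  unfolding cinner_def by (auto simp: cnj_sum mult.commute)

lemma cinner_add_left:
  "dim_vec v = dim_vec u \<Longrightarrow> dim_vec w = dim_vec u \<Longrightarrow> cinner (u + w) v = cinner u v + cinner w v"
  unfolding cinner_def by (auto simp: sum.distrib algebra_simps)

lemma cinner_add_right:
  "dim_vec v = dim_vec u \<Longrightarrow> dim_vec w = dim_vec u \<Longrightarrow> cinner u (v + w) = cinner u v + cinner u w"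
  unfolding cinner_def by (auto simp: sum.distrib algebra_simps)

lemma cinner_smult_left: "dim_vec v = dim_vec u \<Longrightarrow> cinner (c \<cdot>\<^sub>v u) v = cnj c * cinner u v"
  unfolding cinner_def by (auto simp: sum_distrib_left algebra_simps)

lemma cinner_smult_right: "dim_vec v = dim_vec u \<Longrightarrow> cinner u (c \<cdot>\<^sub>v v) = c * cinner u v"
  unfolding cinner_def by (auto simp: sum_distrib_left algebra_simps)

lemma sum_lessThan_add:
  fixes f :: "nat \<Rightarrow> 'a :: comm_monoid_add"
  shows "(\<Sum>i<n + m. f i) = (\<Sum>i<n. f i) + (\<Sum>i<m. f (n + i))"
  by (induct m) (auto simp: add.assoc)

lemma cinner_append:
  assumes "x \<in> carrier_vec n" "y \<in> carrier_vec m" "u \<in> carrier_vec n" "w \<in> carrier_vec m"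
  shows "cinner (x @\<^sub>v y) (u @\<^sub>v w) = cinner x u + cinner y w"
  using assms unfolding cinner_def by (simp add: sum_lessThan_add)

lemma index_mult_mat_vec_carrier:
  "A \<in> carrier_mat n m \<Longrightarrow> v \<in> carrier_vec m \<Longrightarrow> i < n \<Longrightarrow>
    (A *\<^sub>v v) $ i = (\<Sum>j<m. A $$ (i,j) * v $ j)"
  by (auto simp: scalar_prod_def atLeast0LessThan)

lemma cinner_adj:
  assumes "A \<in> carrier_mat n m" "u \<in> carrier_vec n" "v \<in> carrier_vec m"
  shows "cinner u (A *\<^sub>v v) = cinner (adj A *\<^sub>v u) v"
proof -
  have "cinner u (A *\<^sub>v v) = (\<Sum>i<n. \<Sum>j<m. cnj (u $ i) * A $$ (i,j) * v $ j)"
    using assms unfolding cinner_def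
    by (auto simp: index_mult_mat_vec_carrier sum_distrib_left mult.assoc simp del: index_mult_mat_vec)
  also have "\<dots> = (\<Sum>j<m. \<Sum>i<n. cnj (u $ i) * A $$ (i,j) * v $ j)"
    by (rule sum.swap)
  also have "\<dots> = cinner (adj A *\<^sub>v u) v"
    using assms unfolding cinner_def
    by (auto simp: index_mult_mat_vec_carrier[of "adj A" m n] cnj_sum sum_distrib_right
        simp del: index_mult_mat_vec intro!: sum.cong)
  finally show ?thesis .
qed

lemma hermitian_cinner:
  assumes "hermitian A" "A \<in> carrier_mat n n" "x \<in> carrier_vec n" "y \<in> carrier_vec n"
  shows "cinner x (A *\<^sub>v y) = cinner (A *\<^sub>v x) y"
  using cinner_adj[OF assms(2-4)] hermitian_adj[OF assms(1)] by simp

lemma hermitian_qform_real: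
  assumes "hermitian A" "A \<in> carrier_mat n n" "v \<in> carrier_vec n"
  shows "Im (qform A v) = 0"
proof -
  have "qform A v = cnj (qform A v)"
    unfolding qform_cinner using assms by (simp add: hermitian_cinner[OF assms(1,2,3,3)] cnj_cinner)
  then show ?thesis
    by (metis cnj.sel(2) equal_neg_zero)
qed

lemma qform_add_smult:
  assumes "hermitian B" "B \<in> carrier_mat n n" "x \<in> carrier_vec n" "y \<in> carrier_vec n"
  shows "qform B (x + c \<cdot>\<^sub>v y) =
    qform B x + c * cinner x (B *\<^sub>v y) + cnj (c * cinner x (B *\<^sub>v y))
      + cnj c * c * qform B y"
proof -
  have "B *\<^sub>v (x + c \<cdot>\<^sub>v y) = B *\<^sub>v x + c \<cdot>\<^sub>v (B *\<^sub>v y)"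
    using assms by (simp add: mult_add_distrib_mat_vec[of B n n] mult_mat_vec[of B n n])
  moreover have "cinner y (B *\<^sub>v x) = cnj (cinner x (B *\<^sub>v y))"
    using assms by (simp add: hermitian_cinner[OF assms(1,2,4,3)] cnj_cinner)
  ultimately show ?thesis
    unfolding qform_cinner using assms
    by (simp add: cinner_add_right cinner_add_left cinner_smult_right cinner_smult_left algebra_simps)
qed

lemma psd_cauchy_schwarz:
  assumes "psd B" "B \<in> carrier_mat n n" "x \<in> carrier_vec n" "y \<in> carrier_vec n"
  shows "(cmod (cinner x (B *\<^sub>v y)))\<^sup>2 \<le> Re (qform B x) * Re (qform B y)"
proof -
  define z where "z = cinner x (B *\<^sub>v y)"
  define a where "a = Re (qform B x)"
  define b where "b = Re (qform B y)"
  have hB: "hermitian B" and b0: "b \<ge> 0"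
    using assms unfolding psd_def b_def by auto
  have quadratic: "0 \<le> a - 2 * t * (cmod z)\<^sup>2 + t\<^sup>2 * (cmod z)\<^sup>2 * b" for t :: real
  proof -
    define c where "c = - (of_real t * cnj z)"
    have cz: "c * z = - of_real (t * (cmod z)\<^sup>2)" and cc: "cnj c * c = of_real (t\<^sup>2 * (cmod z)\<^sup>2)"
      unfolding c_def using complex_norm_square[of z]
      by (simp_all add: power2_eq_square algebra_simps)
    have "0 \<le> Re (qform B (x + c \<cdot>\<^sub>v y))"
      using assms unfolding psd_def by auto
    also have "\<dots> = a - 2 * t * (cmod z)\<^sup>2 + t\<^sup>2 * (cmod z)\<^sup>2 * b"
      unfolding qform_add_smult[OF hB assms(2-4)] z_def[symmetric] cz cc a_def b_def
      using hermitian_qform_real[OF hB assms(2,4)] by simp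
    finally show ?thesis .
  qed
  have "(cmod z)\<^sup>2 \<le> a * b"
  proof (cases "b = 0")
    case True
    have "(cmod z)\<^sup>2 = 0"
    proof (rule ccontr)
      assume "(cmod z)\<^sup>2 \<noteq> 0"
      then have "(cmod z)\<^sup>2 > 0" by simp
      then show False
        using quadratic[of "(a + 1) / (2 * (cmod z)\<^sup>2)"] True by (simp add: field_simps)
    qed
    then show ?thesis using True by simp
  next
    case False
    then have "b > 0" using b0 by simp
    then show ?thesis
      using quadratic[of "1 / b"] by (simp add: field_simps power2_eq_square)
  qed
  then show ?thesis unfolding z_def a_def b_def .
qed

lemma psd_one: "psd (1\<^sub>m n)"
  unfolding psd_def qform_cinner by (simp add: hermitian_one cinner_self sqnorm_nonneg)

lemma cinner_cauchy_schwarz: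
  "u \<in> carrier_vec n \<Longrightarrow> w \<in> carrier_vec n \<Longrightarrow> (cmod (cinner u w))\<^sup>2 \<le> sqnorm u * sqnorm w"
  using psd_cauchy_schwarz[OF psd_one one_carrier_mat, of u n w]
  by (simp add: qform_cinner cinner_self)

text \<open>An explicit bound for the squared operator norm, available before \<open>op_norm\<close> is known
  to be finite.\<close>

definition row_abs_sum_sq :: "complex mat \<Rightarrow> real" where
  "row_abs_sum_sq M = (\<Sum>i<dim_row M. (\<Sum>j<dim_col M. cmod (M $$ (i,j)))\<^sup>2)"

lemma row_abs_sum_sq_nonneg: "row_abs_sum_sq M \<ge> 0"
  unfolding row_abs_sum_sq_def by (auto intro: sum_nonneg)

lemma sqnorm_mult_mat_vec_le:
  assumes "M \<in> carrier_mat r c" "v \<in> carrier_vec c"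
  shows "sqnorm (M *\<^sub>v v) \<le> row_abs_sum_sq M * sqnorm v"
proof -
  have entry: "cmod (v $ j) \<le> sqrt (sqnorm v)" if "j < c" for j
  proof -
    have "(cmod (v $ j))\<^sup>2 \<le> sqnorm v"
      unfolding sqnorm_def using that assms(2) by (intro member_le_sum) auto
    then show ?thesis by (simp add: real_le_rsqrt)
  qed
  have "(cmod ((M *\<^sub>v v) $ i))\<^sup>2 \<le> (\<Sum>j<c. cmod (M $$ (i,j)))\<^sup>2 * sqnorm v" if "i < r" for i
  proof -
    have "cmod ((M *\<^sub>v v) $ i) \<le> (\<Sum>j<c. cmod (M $$ (i,j) * v $ j))"
      unfolding index_mult_mat_vec_carrier[OF assms that] by (rule norm_sum)
    also have "\<dots> \<le> (\<Sum>j<c. cmod (M $$ (i,j))) * sqrt (sqnorm v)"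
      unfolding sum_distrib_right norm_mult by (intro sum_mono mult_left_mono entry) auto
    finally have "(cmod ((M *\<^sub>v v) $ i))\<^sup>2 \<le> ((\<Sum>j<c. cmod (M $$ (i,j))) * sqrt (sqnorm v))\<^sup>2"
      by (rule power_mono) simp
    then show ?thesis
      using sqnorm_nonneg[of v] by (simp add: power_mult_distrib)
  qed
  then have "sqnorm (M *\<^sub>v v) \<le> (\<Sum>i<r. (\<Sum>j<c. cmod (M $$ (i,j)))\<^sup>2 * sqnorm v)"
    unfolding sqnorm_def using assms by (auto intro!: sum_mono)
  then show ?thesis
    unfolding row_abs_sum_sq_def using assms by (simp add: sum_distrib_right)
qed

lemma cmod_qform_le:
  assumes "A \<in> carrier_mat n n" "y \<in> carrier_vec n"
  shows "cmod (qform A y) \<le> sqrt (row_abs_sum_sq A) * sqnorm y"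
proof (rule power2_le_imp_le)
  have "(cmod (qform A y))\<^sup>2 \<le> sqnorm y * sqnorm (A *\<^sub>v y)"
    unfolding qform_cinner using assms by (intro cinner_cauchy_schwarz) auto
  also have "\<dots> \<le> sqnorm y * (row_abs_sum_sq A * sqnorm y)"
    by (rule mult_left_mono[OF sqnorm_mult_mat_vec_le[OF assms] sqnorm_nonneg])
  also have "\<dots> = (sqrt (row_abs_sum_sq A) * sqnorm y)\<^sup>2"
    using row_abs_sum_sq_nonneg[of A] by (simp add: power_mult_distrib power2_eq_square)
  finally show "(cmod (qform A y))\<^sup>2 \<le> (sqrt (row_abs_sum_sq A) * sqnorm y)\<^sup>2" .
qed (simp add: row_abs_sum_sq_nonneg sqnorm_nonneg)

lemma psd_sqnorm_mult_vec_le: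
  assumes "psd B" "B \<in> carrier_mat n n" "y \<in> carrier_vec n"
  shows "sqnorm (B *\<^sub>v y) \<le> sqrt (row_abs_sum_sq B) * Re (qform B y)"
proof -
  define w where "w = B *\<^sub>v y"
  have w: "w \<in> carrier_vec n" unfolding w_def using assms by simp
  have q0: "Re (qform B y) \<ge> 0" using assms unfolding psd_def by auto
  have "(sqnorm w)\<^sup>2 \<le> Re (qform B w) * Re (qform B y)"
    using psd_cauchy_schwarz[OF assms(1,2) w assms(3)] by (simp add: w_def cinner_self)
  also have "\<dots> \<le> sqrt (row_abs_sum_sq B) * sqnorm w * Re (qform B y)"
    using cmod_qform_le[OF assms(2) w] complex_Re_le_cmod order_trans q0
    by (intro mult_right_mono) blast+
  finally have "sqnorm w * sqnorm w \<le> sqnorm w * (sqrt (row_abs_sum_sq B) * Re (qform B y))"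
    by (simp add: power2_eq_square algebra_simps)
  then show ?thesis
    using sqnorm_nonneg[of w] q0 row_abs_sum_sq_nonneg[of B]
    by (cases "sqnorm w = 0") (auto simp: w_def)
qed

section \<open>Conjugation, unitaries and the trace\<close>

lemma conj_carrier_mat:
  "P \<in> carrier_mat r n \<Longrightarrow> M \<in> carrier_mat n n \<Longrightarrow> P * M * adj P \<in> carrier_mat r r"
  by (metis adj_carrier mult_carrier_mat)

lemma hermitian_conj:
  assumes "hermitian M" "M \<in> carrier_mat n n" "P \<in> carrier_mat r n"
  shows "hermitian (P * M * adj P)"
proof -
  have "adj (P * M * adj P) = P * (adj M * adj P)"
    using assms by (simp add: adj_mult[of _ r n _ r] adj_mult[of _ r n _ n])
  also have "\<dots> = P * M * adj P"
    using assms by (simp add: hermitian_adj assoc_mult_mat[of _ r n _ n _ r])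
  finally show ?thesis
    unfolding hermitian_def using conj_carrier_mat[OF assms(3,2)] by auto
qed

lemma qform_conj:
  assumes "M \<in> carrier_mat n n" "P \<in> carrier_mat r n" "v \<in> carrier_vec r"
  shows "qform (P * M * adj P) v = qform M (adj P *\<^sub>v v)"
proof -
  have w: "adj P *\<^sub>v v \<in> carrier_vec n" using assms(2) by simp
  have "(P * M * adj P) *\<^sub>v v = (P * M) *\<^sub>v (adj P *\<^sub>v v)"
    using assms by (intro assoc_mult_mat_vec) auto
  also have "\<dots> = P *\<^sub>v (M *\<^sub>v (adj P *\<^sub>v v))"
    using assms w by (intro assoc_mult_mat_vec) auto
  also have "cinner v \<dots> = cinner (adj P *\<^sub>v v) (M *\<^sub>v (adj P *\<^sub>v v))"
    using assms(1) w by (intro cinner_adj[OF assms(2,3)]) simp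
  finally show ?thesis
    unfolding qform_cinner .
qed

lemma psd_conj:
  assumes "psd M" "M \<in> carrier_mat n n" "P \<in> carrier_mat r n"
  shows "psd (P * M * adj P)"
  unfolding psd_def
proof (intro conjI ballI)
  show "hermitian (P * M * adj P)"
    using assms hermitian_conj unfolding psd_def by blast
  fix v :: "complex vec" assume "v \<in> carrier_vec (dim_row (P * M * adj P))"
  then have v: "v \<in> carrier_vec r" using assms(3) by simp
  have "adj P *\<^sub>v v \<in> carrier_vec n" using assms(3) by simp
  then show "Im (qform (P * M * adj P) v) = 0" "Re (qform (P * M * adj P) v) \<ge> 0"
    using assms(1,2) unfolding qform_conj[OF assms(2,3) v] psd_def by auto
qed

definition unitary :: "nat \<Rightarrow> complex mat \<Rightarrow> bool" where
  "unitary n U \<longleftrightarrow> U \<in> carrier_mat n n \<and> adj U * U = 1\<^sub>m n"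

lemma unitary_mult_adj: "unitary n U \<Longrightarrow> U * adj U = 1\<^sub>m n"
  unfolding unitary_def by (intro mat_mult_left_right_inverse[of "adj U" n]) auto

lemma unitary_one: "unitary n (1\<^sub>m n)"
  unfolding unitary_def by simp

lemma unitary_mult:
  assumes "unitary n U" "unitary n V"
  shows "unitary n (U * V)"
proof -
  have U: "U \<in> carrier_mat n n" and V: "V \<in> carrier_mat n n"
    using assms unfolding unitary_def by auto
  have "adj (U * V) * (U * V) = adj V * ((adj U * U) * V)"
    using U V by (simp add: adj_mult[OF U V] assoc_mult_mat[of _ n n _ n _ n])
  then show ?thesis
    using assms U V unfolding unitary_def by simp
qed

lemma mtrace_mult_comm:
  assumes "A \<in> carrier_mat n m" "B \<in> carrier_mat m n"
  shows "mtrace (A * B) = mtrace (B * A)"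
proof -
  have "mtrace (A * B) = (\<Sum>i<n. \<Sum>j<m. A $$ (i,j) * B $$ (j,i))"
    unfolding mtrace_def using assms by (auto simp: scalar_prod_def atLeast0LessThan)
  also have "\<dots> = (\<Sum>j<m. \<Sum>i<n. A $$ (i,j) * B $$ (j,i))"
    by (rule sum.swap)
  also have "\<dots> = mtrace (B * A)"
    unfolding mtrace_def using assms by (auto simp: scalar_prod_def atLeast0LessThan mult.commute)
  finally show ?thesis .
qed

lemma mtrace_unitary_conj:
  assumes "unitary n U" "M \<in> carrier_mat n n"
  shows "mtrace (U * M * adj U) = mtrace M"
proof -
  have U: "U \<in> carrier_mat n n" using assms unfolding unitary_def by auto
  have "mtrace (U * M * adj U) = mtrace (adj U * (U * M))"
    using U assms by (intro mtrace_mult_comm[of _ n n]) auto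
  also have "adj U * (U * M) = (adj U * U) * M"
    using U assms by (intro assoc_mult_mat[symmetric]) auto
  finally show ?thesis
    using assms unfolding unitary_def by simp
qed

lemma density_matrix_unitary_conj:
  assumes "unitary n U" "density_matrix n M"
  shows "density_matrix n (U * M * adj U)"
proof -
  have U: "U \<in> carrier_mat n n" using assms(1) unfolding unitary_def by simp
  have M: "M \<in> carrier_mat n n" "hermitian M" "psd M" "mtrace M = 1"
    using assms(2) unfolding density_matrix_def by auto
  show ?thesis
    unfolding density_matrix_def
    using conj_carrier_mat[OF U M(1)] hermitian_conj[OF M(2,1) U] psd_conj[OF M(3,1) U]
      mtrace_unitary_conj[OF assms(1) M(1)] M(4) by simp
qed

lemma strictly_pd_unitary_conj:
  assumes "unitary n U" "strictly_pd M" "M \<in> carrier_mat n n"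
  shows "strictly_pd (U * M * adj U)"
  unfolding strictly_pd_def
proof (intro conjI ballI impI)
  have U: "U \<in> carrier_mat n n" using assms unfolding unitary_def by auto
  show "hermitian (U * M * adj U)"
    using assms U hermitian_conj unfolding strictly_pd_def by blast
  fix v :: "complex vec"
  assume "v \<in> carrier_vec (dim_row (U * M * adj U))" "v \<noteq> 0\<^sub>v (dim_row (U * M * adj U))"
  then have v: "v \<in> carrier_vec n" "v \<noteq> 0\<^sub>v n" using U by auto
  have w: "adj U *\<^sub>v v \<in> carrier_vec n" using U by simp
  have "adj U *\<^sub>v v \<noteq> 0\<^sub>v n"
  proof
    assume "adj U *\<^sub>v v = 0\<^sub>v n"
    then have "U *\<^sub>v (adj U *\<^sub>v v) = 0\<^sub>v n" using U by auto
    moreover have "U *\<^sub>v (adj U *\<^sub>v v) = v"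
      using U v unitary_mult_adj[OF assms(1)] by (simp flip: assoc_mult_mat_vec[of _ n n _ n])
    ultimately show False using v by simp
  qed
  then show "Im (qform (U * M * adj U) v) = 0" "Re (qform (U * M * adj U) v) > 0"
    using assms(2,3) w unfolding qform_conj[OF assms(3) U v(1)] strictly_pd_def by auto
qed

section \<open>The smallest eigenvalue bounds the quadratic form\<close>

lemma finite_eigenvalues:
  assumes "(A :: complex mat) \<in> carrier_mat n n"
  shows "finite {e. eigenvalue A e}"
proof -
  have "char_poly A \<noteq> 0"
    using degree_monic_char_poly[OF assms] by auto
  then show ?thesis
    using poly_roots_finite eigenvalue_root_char_poly[OF assms] by simp
qed

lemma lambda_min_le:
  assumes "A \<in> carrier_mat n n" "eigenvalue A (of_real s)"
  shows "lambda_min A \<le> s"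
proof -
  have "s \<in> Re ` {e. eigenvalue A e}"
    using assms(2) by (intro image_eqI[of _ _ "of_real s"]) auto
  then show ?thesis
    unfolding lambda_min_def using finite_eigenvalues[OF assms(1)] by (intro Min_le) auto
qed

lemma qform_char_matrix:
  assumes "A \<in> carrier_mat n n" "y \<in> carrier_vec n"
  shows "qform (char_matrix A e) y = qform A y - e * of_real (sqnorm y)"
proof -
  have "char_matrix A e *\<^sub>v y = A *\<^sub>v y + (- e) \<cdot>\<^sub>v y"
    unfolding char_matrix_def using assms
    by (intro eq_vecI) (auto simp: add_scalar_prod_distrib[of _ n])
  then show ?thesis
    unfolding qform_cinner using assms
    by (simp add: cinner_add_right cinner_smult_right cinner_self)
qed

lemma hermitian_char_matrix:
  assumes "hermitian A" "A \<in> carrier_mat n n"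
  shows "hermitian (char_matrix A (of_real s))"
proof -
  have "cnj (A $$ (j,i)) = A $$ (i,j)" if "i < n" "j < n" for i j
    using that assms index_adj[of i A j] hermitian_adj[OF assms(1)] by auto
  then show ?thesis
    unfolding hermitian_def char_matrix_def using assms(2)
    by (auto intro!: eq_matI)
qed

lemma det_nonzero_imp_inverse:
  assumes "(A :: complex mat) \<in> carrier_mat n n" "det A \<noteq> 0"
  obtains B where "B \<in> carrier_mat n n" "B * A = 1\<^sub>m n" "A * B = 1\<^sub>m n"
  using det_non_zero_imp_unit[OF assms, of undefined] that
  unfolding Units_def ring_mat_def by auto

lemma det_nonzero_mat_inv:
  assumes "A \<in> carrier_mat n n" "det A \<noteq> 0"
  shows "mat_inv A \<in> carrier_mat n n" "A * mat_inv A = 1\<^sub>m n"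
proof -
  obtain B where "B \<in> carrier_mat n n" "B * A = 1\<^sub>m n" "A * B = 1\<^sub>m n"
    using det_nonzero_imp_inverse[OF assms] .
  then have "\<exists>B. B \<in> carrier_mat (dim_row A) (dim_row A) \<and> inverts_mat A B \<and> inverts_mat B A"
    using assms(1) unfolding inverts_mat_def by auto
  from someI_ex[OF this] show "mat_inv A \<in> carrier_mat n n" "A * mat_inv A = 1\<^sub>m n"
    using assms(1) unfolding mat_inv_def inverts_mat_def by auto
qed

lemma strictly_pd_det_nonzero:
  assumes "strictly_pd A" "A \<in> carrier_mat n n"
  shows "det A \<noteq> 0"
proof
  assume "det A = 0"
  then obtain v where v: "v \<in> carrier_vec n" "v \<noteq> 0\<^sub>v n" "A *\<^sub>v v = 0\<^sub>v n"
    using det_0_iff_vec_prod_zero[OF assms(2)] by auto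
  then have "qform A v = 0" unfolding qform_def by simp
  then show False using assms v unfolding strictly_pd_def by auto
qed

text \<open>An inverse would give \<open>|y|\<^sup>2 \<le> c |B y|\<^sup>2 \<le> c' \<langle>y, B y\<rangle>\<close>.\<close>

lemma psd_det_zero:
  assumes "psd B" "B \<in> carrier_mat n n"
    and small: "\<And>\<epsilon>. \<epsilon> > 0 \<Longrightarrow> \<exists>y\<in>carrier_vec n. Re (qform B y) < \<epsilon> * sqnorm y"
  shows "det B = 0"
proof (rule ccontr)
  assume "det B \<noteq> 0"
  then obtain Bi where Bi: "Bi \<in> carrier_mat n n" "Bi * B = 1\<^sub>m n"
    using det_nonzero_imp_inverse[OF assms(2)] by blast
  define K where "K = row_abs_sum_sq Bi * sqrt (row_abs_sum_sq B)"
  have K0: "K \<ge> 0" unfolding K_def by (simp add: row_abs_sum_sq_nonneg)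
  obtain y where y: "y \<in> carrier_vec n" and lt: "Re (qform B y) < 1 / (K + 1) * sqnorm y"
    using small[of "1 / (K + 1)"] K0 by auto
  have "Re (qform B y) \<ge> 0" using assms(1,2) y unfolding psd_def by auto
  then have "0 < 1 / (K + 1) * sqnorm y" using lt by linarith
  then have pos: "sqnorm y > 0" using K0 by (auto simp: zero_less_divide_iff)
  have "y = Bi *\<^sub>v (B *\<^sub>v y)"
    using Bi y assms(2) by (simp flip: assoc_mult_mat_vec[of _ n n _ n])
  then have "sqnorm y \<le> row_abs_sum_sq Bi * sqnorm (B *\<^sub>v y)"
    using sqnorm_mult_mat_vec_le[OF Bi(1), of "B *\<^sub>v y"] assms(2) y by simp
  also have "\<dots> \<le> K * Re (qform B y)"
    unfolding K_def mult.assoc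
    by (intro mult_left_mono psd_sqnorm_mult_vec_le[OF assms(1,2) y] row_abs_sum_sq_nonneg)
  also have "\<dots> \<le> K * (1 / (K + 1) * sqnorm y)"
    using lt K0 by (intro mult_left_mono) auto
  also have "\<dots> < sqnorm y"
    using pos K0 by (simp add: field_simps)
  finally show False by simp
qed

text \<open>The infimum \<open>s\<close> of the Rayleigh quotient is an eigenvalue: \<open>A - s\<close> is positive
  semidefinite and, by \<open>psd_det_zero\<close>, singular.\<close>

lemma lambda_min_le_qform:
  assumes "hermitian A" "A \<in> carrier_mat n n" "n > 0" "y \<in> carrier_vec n"
  shows "lambda_min A * sqnorm y \<le> Re (qform A y)"
proof -
  define S where "S = {t. \<forall>y\<in>carrier_vec n. t * sqnorm y \<le> Re (qform A y)}"
  have "- sqrt (row_abs_sum_sq A) \<in> S"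
    unfolding S_def
  proof (intro CollectI ballI)
    fix y :: "complex vec" assume y: "y \<in> carrier_vec n"
    have "- Re (qform A y) \<le> cmod (qform A y)"
      using abs_Re_le_cmod[of "qform A y"] by linarith
    then show "- sqrt (row_abs_sum_sq A) * sqnorm y \<le> Re (qform A y)"
      using cmod_qform_le[OF assms(2) y] by linarith
  qed
  then have ne: "S \<noteq> {}" by blast
  have bdd: "bdd_above S"
  proof (rule bdd_aboveI)
    fix t assume "t \<in> S"
    then have "t * sqnorm (unit_vec n 0) \<le> Re (qform A (unit_vec n 0))"
      unfolding S_def by simp
    then show "t \<le> Re (qform A (unit_vec n 0))"
      using sqnorm_unit_vec[OF assms(3)] by simp
  qed
  define s where "s = Sup S"
  have "s \<in> S"
    unfolding S_def
  proof (intro CollectI ballI)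
    fix y :: "complex vec" assume y: "y \<in> carrier_vec n"
    show "s * sqnorm y \<le> Re (qform A y)"
    proof (cases "sqnorm y = 0")
      case True
      then show ?thesis using sqnorm_eq_0_iff[OF y] by (simp add: qform_def)
    next
      case False
      then have pos: "sqnorm y > 0" using sqnorm_nonneg[of y] by simp
      have "s \<le> Re (qform A y) / sqnorm y"
        unfolding s_def using y pos by (intro cSup_least[OF ne]) (auto simp: S_def le_divide_eq)
      then show ?thesis using pos by (simp add: le_divide_eq)
    qed
  qed
  define B where "B = char_matrix A (of_real s)"
  have B: "B \<in> carrier_mat n n" unfolding B_def using assms(2) by simp
  have qB: "Re (qform B y) = Re (qform A y) - s * sqnorm y" if "y \<in> carrier_vec n" for y
    unfolding B_def qform_char_matrix[OF assms(2) that] by simp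
  have "psd B"
    unfolding psd_def
    using hermitian_char_matrix[OF assms(1,2)] hermitian_qform_real \<open>s \<in> S\<close> B qB
    by (auto simp: B_def S_def)
  moreover have "\<exists>y\<in>carrier_vec n. Re (qform B y) < \<epsilon> * sqnorm y" if "\<epsilon> > 0" for \<epsilon>
  proof -
    have "s + \<epsilon> \<notin> S" using cSup_upper[OF _ bdd, of "s + \<epsilon>"] that unfolding s_def by force
    then show ?thesis unfolding S_def using qB by (force simp: algebra_simps)
  qed
  ultimately have "det B = 0" by (rule psd_det_zero[OF _ B])
  then have "lambda_min A \<le> s"
    using lambda_min_le[OF assms(2)] eigenvalue_det[OF assms(2)] unfolding B_def by blast
  then have "lambda_min A * sqnorm y \<le> s * sqnorm y"
    by (rule mult_right_mono[OF _ sqnorm_nonneg])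
  also have "\<dots> \<le> Re (qform A y)" using \<open>s \<in> S\<close> assms(4) unfolding S_def by blast
  finally show ?thesis .
qed

section \<open>The operator norm\<close>

lemma op_norm_upper:
  assumes "M \<in> carrier_mat r c" "v \<in> carrier_vec c" "vnorm v \<le> 1"
  shows "vnorm (M *\<^sub>v v) \<le> op_norm M"
  unfolding op_norm_def
proof (rule cSup_upper)
  show "vnorm (M *\<^sub>v v) \<in> {vnorm (M *\<^sub>v v) |v. v \<in> carrier_vec (dim_col M) \<and> vnorm v \<le> 1}"
    using assms by auto
  have "vnorm (M *\<^sub>v w) \<le> sqrt (row_abs_sum_sq M)" if "w \<in> carrier_vec c" "vnorm w \<le> 1" for w
  proof -
    have "sqnorm w \<le> 1" using that(2) by (simp add: vnorm_sqnorm)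
    then have "sqnorm (M *\<^sub>v w) \<le> row_abs_sum_sq M"
      using sqnorm_mult_mat_vec_le[OF assms(1) that(1)] row_abs_sum_sq_nonneg[of M]
      by (meson mult_left_le order_trans sqnorm_nonneg)
    then show ?thesis by (simp add: vnorm_sqnorm)
  qed
  then show "bdd_above {vnorm (M *\<^sub>v v) |v. v \<in> carrier_vec (dim_col M) \<and> vnorm v \<le> 1}"
    using assms(1) by (intro bdd_aboveI[of _ "sqrt (row_abs_sum_sq M)"]) auto
qed

lemma op_norm_nonneg: "M \<in> carrier_mat r c \<Longrightarrow> op_norm M \<ge> 0"
  using op_norm_upper[of M r c "0\<^sub>v c"] by (simp add: vnorm_def)

lemma vnorm_smult: "vnorm (c \<cdot>\<^sub>v v) = cmod c * vnorm v"
  unfolding vnorm_sqnorm sqnorm_smult by (simp add: real_sqrt_mult)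

lemma vnorm_mult_mat_vec_le:
  assumes "M \<in> carrier_mat r c" "y \<in> carrier_vec c"
  shows "vnorm (M *\<^sub>v y) \<le> op_norm M * vnorm y"
proof (cases "vnorm y = 0")
  case True
  then have "y = 0\<^sub>v c" using sqnorm_eq_0_iff[OF assms(2)] by (simp add: vnorm_sqnorm)
  then show ?thesis using assms(1) by (simp add: vnorm_def)
next
  case False
  then have pos: "vnorm y > 0" using sqnorm_nonneg[of y] by (simp add: vnorm_sqnorm)
  define t where "t = complex_of_real (1 / vnorm y)"
  have ct: "cmod t = 1 / vnorm y" unfolding t_def using pos by (simp add: norm_divide)
  then have t: "cmod t * vnorm y = 1" using pos by simp
  have "vnorm (M *\<^sub>v (t \<cdot>\<^sub>v y)) \<le> op_norm M"
    using assms t by (intro op_norm_upper[OF assms(1)]) (simp_all add: vnorm_smult)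
  then have "cmod t * vnorm (M *\<^sub>v y) \<le> op_norm M"
    using assms by (simp add: mult_mat_vec vnorm_smult)
  then show ?thesis using pos unfolding ct by (simp add: divide_le_eq mult.commute)
qed

lemma cmod_qform_le_op_norm:
  assumes "M \<in> carrier_mat n n" "y \<in> carrier_vec n"
  shows "cmod (qform M y) \<le> op_norm M * sqnorm y"
proof (rule power2_le_imp_le)
  have "(vnorm (M *\<^sub>v y))\<^sup>2 \<le> (op_norm M * vnorm y)\<^sup>2"
    by (rule power_mono[OF vnorm_mult_mat_vec_le[OF assms]]) (simp add: vnorm_sqnorm sqnorm_nonneg)
  then have My: "sqnorm (M *\<^sub>v y) \<le> (op_norm M)\<^sup>2 * sqnorm y"
    by (simp add: vnorm_sqnorm power_mult_distrib sqnorm_nonneg)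
  have "(cmod (qform M y))\<^sup>2 \<le> sqnorm y * sqnorm (M *\<^sub>v y)"
    unfolding qform_cinner using assms by (intro cinner_cauchy_schwarz) auto
  also have "\<dots> \<le> sqnorm y * ((op_norm M)\<^sup>2 * sqnorm y)"
    by (rule mult_left_mono[OF My sqnorm_nonneg])
  also have "\<dots> = (op_norm M * sqnorm y)\<^sup>2"
    by (simp add: power2_eq_square)
  finally show "(cmod (qform M y))\<^sup>2 \<le> (op_norm M * sqnorm y)\<^sup>2" .
  show "0 \<le> op_norm M * sqnorm y"
    using op_norm_nonneg[OF assms(1)] sqnorm_nonneg by simp
qed

section \<open>Positive semidefinite block matrices\<close>

lemma smult_mat_mult_vec:
  assumes "A \<in> carrier_mat n m" "v \<in> carrier_vec m"
  shows "(k \<cdot>\<^sub>m A) *\<^sub>v v = k \<cdot>\<^sub>v (A *\<^sub>v v)"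
  using assms by (intro eq_vecI) (auto simp: smult_scalar_prod_distrib[of _ m])

lemma qform_four_block_half:
  assumes "A \<in> carrier_mat n n" "B \<in> carrier_mat n n" "x \<in> carrier_vec n" "y \<in> carrier_vec n"
  shows "qform (four_block_mat ((1/2) \<cdot>\<^sub>m A) B (adj B) ((1/2) \<cdot>\<^sub>m A)) (x @\<^sub>v y)
    = (qform A x + qform A y) / 2 + cinner x (B *\<^sub>v y) + cnj (cinner x (B *\<^sub>v y))"
proof -
  define u w where "u = (1/2) \<cdot>\<^sub>v (A *\<^sub>v x) + B *\<^sub>v y" and "w = adj B *\<^sub>v x + (1/2) \<cdot>\<^sub>v (A *\<^sub>v y)"
  have u: "u \<in> carrier_vec n" and w: "w \<in> carrier_vec n"
    unfolding u_def w_def using assms by auto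
  have "four_block_mat ((1/2) \<cdot>\<^sub>m A) B (adj B) ((1/2) \<cdot>\<^sub>m A) *\<^sub>v (x @\<^sub>v y) = u @\<^sub>v w"
    unfolding u_def w_def using assms
    by (subst four_block_mat_mult_vec[of _ n n]) (auto simp: smult_mat_mult_vec[of _ n n])
  then have "qform (four_block_mat ((1/2) \<cdot>\<^sub>m A) B (adj B) ((1/2) \<cdot>\<^sub>m A)) (x @\<^sub>v y)
      = cinner x u + cinner y w"
    unfolding qform_cinner by (simp add: cinner_append[OF assms(3,4) u w])
  moreover have "cinner y (adj B *\<^sub>v x) = cnj (cinner x (B *\<^sub>v y))"
    using assms by (simp add: cinner_adj[OF assms(2,3,4)] cnj_cinner)
  ultimately show ?thesis
    unfolding u_def w_def qform_cinner using assms by (simp add: cinner_add_right cinner_smult_right)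
qed

lemma psd_four_block_half:
  assumes "psd A" "A \<in> carrier_mat n n" "B \<in> carrier_mat n n"
    and cross: "\<And>x y. x \<in> carrier_vec n \<Longrightarrow> y \<in> carrier_vec n \<Longrightarrow>
      4 * (cmod (cinner x (B *\<^sub>v y)))\<^sup>2 \<le> Re (qform A x) * Re (qform A y)"
  shows "psd (four_block_mat ((1/2) \<cdot>\<^sub>m A) B (adj B) ((1/2) \<cdot>\<^sub>m A))"
    (is "psd ?M")
  unfolding psd_def
proof (intro conjI ballI)
  have hA: "hermitian A" using assms(1) unfolding psd_def by simp
  then show "hermitian ?M"
    unfolding hermitian_def using assms(2,3)
    by (simp add: adj_four_block_mat[of _ n _ n] adj_smult hermitian_adj)
  fix v :: "complex vec" assume "v \<in> carrier_vec (dim_row ?M)"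
  then have v: "v = vec_first v n @\<^sub>v vec_last v n" using assms(2) by simp
  define x y where "x = vec_first v n" and "y = vec_last v n"
  have x: "x \<in> carrier_vec n" and y: "y \<in> carrier_vec n" unfolding x_def y_def by auto
  define z where "z = cinner x (B *\<^sub>v y)"
  define a b where "a = Re (qform A x)" and "b = Re (qform A y)"
  have ab: "a \<ge> 0" "b \<ge> 0" using assms(1,2) x y unfolding psd_def a_def b_def by auto
  have q: "qform ?M v = (qform A x + qform A y) / 2 + z + cnj z"
    unfolding z_def x_def y_def by (subst v) (rule qform_four_block_half[OF assms(2,3)]; simp)
  show "Im (qform ?M v) = 0"
    unfolding q using hermitian_qform_real[OF hA assms(2)] x y by simp
  have "(2 * cmod z)\<^sup>2 \<le> a * b" using cross[OF x y] unfolding z_def a_def b_def by simp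
  also have "\<dots> \<le> ((a + b) / 2)\<^sup>2"
  proof -
    have "((a + b) / 2)\<^sup>2 - a * b = ((a - b) / 2)\<^sup>2" by (simp add: power2_eq_square field_simps)
    then show ?thesis using zero_le_power2[of "(a - b) / 2"] by linarith
  qed
  finally have "2 * cmod z \<le> (a + b) / 2" by (rule power2_le_imp_le) (use ab in simp)
  moreover have "- cmod z \<le> Re z" using abs_Re_le_cmod[of z] by linarith
  moreover have "Re (qform ?M v) = (a + b) / 2 + 2 * Re z"
    unfolding q a_def b_def by simp
  ultimately show "Re (qform ?M v) \<ge> 0" by linarith
qed

lemma mtrace_four_block_half:
  assumes "A \<in> carrier_mat n n" "B \<in> carrier_mat n n" "C \<in> carrier_mat n n"
  shows "mtrace (four_block_mat ((1/2) \<cdot>\<^sub>m A) B C ((1/2) \<cdot>\<^sub>m A)) = mtrace A"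
proof -
  have "mtrace (four_block_mat ((1/2) \<cdot>\<^sub>m A) B C ((1/2) \<cdot>\<^sub>m A))
      = (\<Sum>i<n + n. four_block_mat ((1/2) \<cdot>\<^sub>m A) B C ((1/2) \<cdot>\<^sub>m A) $$ (i,i))"
    unfolding mtrace_def using assms by simp
  also have "\<dots> = (\<Sum>i<n. A $$ (i,i) / 2) + (\<Sum>i<n. A $$ (i,i) / 2)"
    unfolding sum_lessThan_add using assms by simp
  also have "\<dots> = mtrace A"
    unfolding mtrace_def using assms by (simp flip: sum.distrib)
  finally show ?thesis .
qed

lemma cross_term_bound:
  assumes "psd A" "A \<in> carrier_mat n n" "Ai \<in> carrier_mat n n" "A * Ai = 1\<^sub>m n" "n > 0"
    and "hermitian C" "C \<in> carrier_mat n n"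
    and "t\<^sup>2 * op_norm (C * Ai * C) \<le> lambda_min A / 4"
    and "x \<in> carrier_vec n" "y \<in> carrier_vec n"
  shows "4 * (cmod (cinner x ((of_real t \<cdot>\<^sub>m C) *\<^sub>v y)))\<^sup>2 \<le> Re (qform A x) * Re (qform A y)"
proof -
  define w u where "w = C *\<^sub>v y" and "u = Ai *\<^sub>v w"
  have w: "w \<in> carrier_vec n" and u: "u \<in> carrier_vec n"
    unfolding w_def u_def using assms by auto
  have Au: "A *\<^sub>v u = w"
    unfolding u_def using assms w by (simp flip: assoc_mult_mat_vec[of _ n n _ n])
  define a where "a = Re (qform A x)"
  have a: "a \<ge> 0" using assms unfolding psd_def a_def by auto
  have "(cmod (cinner x w))\<^sup>2 \<le> a * Re (qform A u)"
    unfolding a_def Au[symmetric] by (rule psd_cauchy_schwarz[OF assms(1,2,9) u])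
  also have "Re (qform A u) \<le> op_norm (C * Ai * C) * sqnorm y"
  proof -
    have "qform A u = cnj (cinner w u)"
      unfolding qform_cinner Au using u w by (simp add: cnj_cinner)
    also have "cinner w u = qform (C * Ai * C) y"
      unfolding qform_cinner w_def u_def using assms
      by (simp add: hermitian_cinner[OF assms(6,7,10)] assoc_mult_mat_vec[of _ n n _ n])
    finally have "Re (qform A u) = Re (qform (C * Ai * C) y)" by simp
    also have "\<dots> \<le> op_norm (C * Ai * C) * sqnorm y"
      using complex_Re_le_cmod cmod_qform_le_op_norm[of _ n y] assms by (meson mult_carrier_mat order_trans)
    finally show ?thesis .
  qed
  finally have cross: "(cmod (cinner x w))\<^sup>2 \<le> a * (op_norm (C * Ai * C) * sqnorm y)"
    using a by (simp add: mult_left_mono)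
  have "4 * t\<^sup>2 * op_norm (C * Ai * C) * sqnorm y \<le> lambda_min A * sqnorm y"
    using assms(8) sqnorm_nonneg[of y] by (simp add: mult_right_mono)
  also have "\<dots> \<le> Re (qform A y)"
    by (rule lambda_min_le_qform[OF _ assms(2,5,10)]) (use assms(1) in \<open>simp add: psd_def\<close>)
  finally have main: "4 * t\<^sup>2 * op_norm (C * Ai * C) * sqnorm y \<le> Re (qform A y)" .
  have "4 * (cmod (cinner x ((of_real t \<cdot>\<^sub>m C) *\<^sub>v y)))\<^sup>2 = 4 * t\<^sup>2 * (cmod (cinner x w))\<^sup>2"
    unfolding w_def using assms
    by (simp add: smult_mat_mult_vec[of _ n n] cinner_smult_right norm_mult power_mult_distrib)
  also have "\<dots> \<le> 4 * t\<^sup>2 * (a * (op_norm (C * Ai * C) * sqnorm y))"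
    by (rule mult_left_mono[OF cross]) simp
  also have "\<dots> = a * (4 * t\<^sup>2 * op_norm (C * Ai * C) * sqnorm y)"
    by (simp add: algebra_simps)
  also have "\<dots> \<le> a * Re (qform A y)"
    by (rule mult_left_mono[OF main a])
  finally show ?thesis unfolding a_def .
qed

lemma density_matrix_four_block_half:
  assumes "density_matrix n A" "B \<in> carrier_mat n n"
    and "\<And>x y. x \<in> carrier_vec n \<Longrightarrow> y \<in> carrier_vec n \<Longrightarrow>
      4 * (cmod (cinner x (B *\<^sub>v y)))\<^sup>2 \<le> Re (qform A x) * Re (qform A y)"
  shows "density_matrix (n + n) (four_block_mat ((1/2) \<cdot>\<^sub>m A) B (adj B) ((1/2) \<cdot>\<^sub>m A))"
proof -
  have A: "A \<in> carrier_mat n n" "psd A" "mtrace A = 1"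
    using assms(1) unfolding density_matrix_def by auto
  have "psd (four_block_mat ((1/2) \<cdot>\<^sub>m A) B (adj B) ((1/2) \<cdot>\<^sub>m A))"
    by (rule psd_four_block_half[OF A(2,1) assms(2,3)])
  then show ?thesis
    unfolding density_matrix_def psd_def
    using A assms(2) mtrace_four_block_half[OF A(1) assms(2), of "adj B"] by auto
qed

lemma density_matrix_four_block_half_zero:
  assumes "density_matrix n A"
  shows "density_matrix (n + n) (four_block_mat ((1/2) \<cdot>\<^sub>m A) (0\<^sub>m n n) (0\<^sub>m n n) ((1/2) \<cdot>\<^sub>m A))"
proof -
  have "Re (qform A x) * Re (qform A y) \<ge> 0" if "x \<in> carrier_vec n" "y \<in> carrier_vec n" for x y
    using assms that unfolding density_matrix_def psd_def by auto
  then show ?thesis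
    using density_matrix_four_block_half[OF assms zero_carrier_mat] by (simp add: cinner_def)
qed

lemma density_matrix_four_block_half_hermitian:
  assumes "density_matrix n A" "strictly_pd A" "n > 0" "hermitian C" "C \<in> carrier_mat n n"
    and "t\<^sup>2 * op_norm (C * mat_inv A * C) \<le> lambda_min A / 4"
  shows "density_matrix (n + n)
    (four_block_mat ((1/2) \<cdot>\<^sub>m A) (of_real t \<cdot>\<^sub>m C) (of_real t \<cdot>\<^sub>m C) ((1/2) \<cdot>\<^sub>m A))"
proof -
  have A: "A \<in> carrier_mat n n" "psd A" using assms(1) unfolding density_matrix_def by auto
  have "mat_inv A \<in> carrier_mat n n" "A * mat_inv A = 1\<^sub>m n"
    using det_nonzero_mat_inv[OF A(1) strictly_pd_det_nonzero[OF assms(2) A(1)]] by auto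
  then have "density_matrix (n + n)
      (four_block_mat ((1/2) \<cdot>\<^sub>m A) (of_real t \<cdot>\<^sub>m C) (adj (of_real t \<cdot>\<^sub>m C)) ((1/2) \<cdot>\<^sub>m A))"
    using assms by (intro density_matrix_four_block_half cross_term_bound[OF A(2,1)]) auto
  then show ?thesis
    using assms(4) by (simp add: adj_smult hermitian_adj)
qed

section \<open>Tensor products, the one-time pad and permutation matrices\<close>

lemma mult_add_less_mult:
  fixes p q b d :: nat
  assumes "p < b" "q < d"
  shows "p * d + q < b * d"
proof -
  have "p * d + q < (p + 1) * d" using assms(2) by simp
  also have "\<dots> \<le> b * d" using assms(1) by (intro mult_right_mono) auto
  finally show ?thesis .
qed

lemma sum_lessThan_mult:
  fixes g :: "nat \<Rightarrow> 'a :: comm_monoid_add"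
  assumes "d > 0"
  shows "(\<Sum>k<b * d. g k) = (\<Sum>p<b. \<Sum>q<d. g (p * d + q))"
proof -
  have "(\<Sum>k<b * d. g k) = (\<Sum>(p,q)\<in>{..<b} \<times> {..<d}. g (p * d + q))"
    by (rule sum.reindex_bij_witness[where i = "\<lambda>(p,q). p * d + q" and j = "\<lambda>k. (k div d, k mod d)"])
      (use assms in \<open>auto simp: less_mult_imp_div_less mult_add_less_mult\<close>)
  then show ?thesis by (simp add: sum.cartesian_product)
qed

lemma kron_carrier [simp]:
  "A \<in> carrier_mat a b \<Longrightarrow> B \<in> carrier_mat c d \<Longrightarrow> kron A B \<in> carrier_mat (a * c) (b * d)"
  unfolding kron_def carrier_mat_def by auto

lemma index_kron:
  assumes "A \<in> carrier_mat a b" "B \<in> carrier_mat c d" "i < a * c" "j < b * d"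
  shows "kron A B $$ (i,j) = A $$ (i div c, j div d) * B $$ (i mod c, j mod d)"
  using assms unfolding kron_def carrier_mat_def by auto

lemma kron_mult:
  assumes A: "A \<in> carrier_mat a b" and B: "B \<in> carrier_mat c d"
    and C: "C \<in> carrier_mat b e" and D: "D \<in> carrier_mat d f"
    and pos: "c > 0" "d > 0" "f > 0"
  shows "kron A B * kron C D = kron (A * C) (B * D)"
proof (rule eq_matI)
  fix i j assume "i < dim_row (kron (A * C) (B * D))" "j < dim_col (kron (A * C) (B * D))"
  then have i: "i < a * c" and j: "j < e * f" using assms by (auto simp: kron_def)
  have "(kron A B * kron C D) $$ (i,j) = (\<Sum>k<b * d. kron A B $$ (i,k) * kron C D $$ (k,j))"
    using assms i j by (simp add: scalar_prod_def atLeast0LessThan kron_def)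
  also have "\<dots> = (\<Sum>p<b. \<Sum>q<d. (A $$ (i div c, p) * C $$ (p, j div f))
      * (B $$ (i mod c, q) * D $$ (q, j mod f)))"
    unfolding sum_lessThan_mult[OF pos(2)] using assms i j
    by (intro sum.cong refl) (simp add: index_kron[OF A B] index_kron[OF C D] mult_add_less_mult)
  also have "\<dots> = (\<Sum>p<b. A $$ (i div c, p) * C $$ (p, j div f))
      * (\<Sum>q<d. B $$ (i mod c, q) * D $$ (q, j mod f))"
    by (simp add: sum_product)
  also have "\<dots> = kron (A * C) (B * D) $$ (i,j)"
    using assms i j
    by (simp add: index_kron[of _ a e _ c f] scalar_prod_def atLeast0LessThan less_mult_imp_div_less)
  finally show "(kron A B * kron C D) $$ (i,j) = kron (A * C) (B * D) $$ (i,j)" .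
qed (use assms in \<open>simp_all add: kron_def\<close>)

lemma adj_kron:
  assumes A: "A \<in> carrier_mat a b" and B: "B \<in> carrier_mat c d" and pos: "c > 0" "d > 0"
  shows "adj (kron A B) = kron (adj A) (adj B)"
proof (rule eq_matI)
  fix i j assume "i < dim_row (kron (adj A) (adj B))" "j < dim_col (kron (adj A) (adj B))"
  then have i: "i < b * d" and j: "j < a * c" using assms by (auto simp: kron_def)
  then show "adj (kron A B) $$ (i,j) = kron (adj A) (adj B) $$ (i,j)"
    using assms by (simp add: index_kron[of "adj A" b a "adj B" d c] index_kron[OF A B]
        kron_def[of A B] less_mult_imp_div_less)
qed (use assms in \<open>simp_all add: kron_def\<close>)

lemma kron_one: "b > 0 \<Longrightarrow> kron (1\<^sub>m a) (1\<^sub>m b) = 1\<^sub>m (a * b)"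
proof (rule eq_matI)
  fix i j assume "b > 0" "i < dim_row (1\<^sub>m (a * b))" "j < dim_col (1\<^sub>m (a * b))"
  moreover have "i div b = j div b \<and> i mod b = j mod b \<longleftrightarrow> i = j"
    by (metis div_mult_mod_eq)
  ultimately show "kron (1\<^sub>m a) (1\<^sub>m b) $$ (i,j) = 1\<^sub>m (a * b) $$ (i,j)"
    by (auto simp: index_kron[of _ a a _ b b] less_mult_imp_div_less)
qed (simp_all add: kron_def)

lemma unitary_kron:
  assumes "unitary a U" "unitary b V" "a > 0" "b > 0"
  shows "unitary (a * b) (kron U V)"
proof -
  have U: "U \<in> carrier_mat a a" and V: "V \<in> carrier_mat b b"
    using assms unfolding unitary_def by auto
  have "adj (kron U V) * kron U V = kron (adj U * U) (adj V * V)"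
    using assms U V by (simp add: adj_kron[OF U V] kron_mult[of _ a a _ b b _ a _ b])
  then show ?thesis
    using assms U V kron_one unfolding unitary_def by simp
qed

lemma unitary_pauliX: "unitary 2 pauliX"
  unfolding unitary_def pauliX_def
  by (auto intro!: eq_matI simp: scalar_prod_def less_2_cases_iff numeral_2_eq_2)

lemma unitary_pauliZ: "unitary 2 pauliZ"
  unfolding unitary_def pauliZ_def
  by (auto intro!: eq_matI simp: scalar_prod_def less_2_cases_iff numeral_2_eq_2)

lemma unitary_pad_factor: "unitary 2 (pad_factor a b)"
  unfolding pad_factor_def by (intro unitary_mult) (auto simp: unitary_pauliX unitary_pauliZ unitary_one)

lemma unitary_otp_aux: "unitary (2 ^ n) (otp_aux n k)"
proof (induct n)
  case 0
  then show ?case by (simp add: unitary_one)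
next
  case (Suc n)
  have "unitary (2 ^ n * 2) (otp_aux (Suc n) k)"
    unfolding otp_aux.simps by (rule unitary_kron[OF Suc unitary_pad_factor]) auto
  then show ?case by (simp add: mult.commute)
qed

lemma unitary_otp: "length k = 2 * d \<Longrightarrow> unitary (2 ^ d) (otp k)"
  unfolding otp_def using unitary_otp_aux by simp

lemma unitary_perm_mat:
  assumes "\<sigma> permutes {..<n}"
  shows "unitary n (perm_mat n \<sigma>)"
  unfolding unitary_def
proof
  show "perm_mat n \<sigma> \<in> carrier_mat n n" unfolding perm_mat_def by simp
  show "adj (perm_mat n \<sigma>) * perm_mat n \<sigma> = 1\<^sub>m n"
  proof (rule eq_matI)
    fix i j assume "i < dim_row (1\<^sub>m n)" "j < dim_col (1\<^sub>m n)"
    then have i: "i < n" and j: "j < n" by auto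
    have "(adj (perm_mat n \<sigma>) * perm_mat n \<sigma>) $$ (i,j)
        = (\<Sum>k<n. (if k = \<sigma> i then 1 else 0) * (if k = \<sigma> j then 1 else 0))"
      using i j unfolding perm_mat_def by (auto simp: scalar_prod_def atLeast0LessThan intro!: sum.cong)
    also have "\<dots> = (\<Sum>k<n. if k = \<sigma> i then (if \<sigma> i = \<sigma> j then 1 else 0) else 0)"
      by (intro sum.cong) auto
    also have "\<dots> = 1\<^sub>m n $$ (i,j)"
      using i j permutes_in_image[OF assms] permutes_inj[OF assms] by (auto dest: injD)
    finally show "(adj (perm_mat n \<sigma>) * perm_mat n \<sigma>) $$ (i,j) = 1\<^sub>m n $$ (i,j)" .
  qed (simp_all add: perm_mat_def)
qed

lemma embed_iso_carrier:
  assumes "d2 \<le> d1"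
  shows "embed_iso d1 d2 \<in> carrier_mat (2 ^ d1) (2 ^ d2)"
proof -
  have "embed_iso d1 d2 \<in> carrier_mat (2 ^ d2 * 2 ^ (d1 - d2)) (2 ^ d2 * 1)"
    unfolding embed_iso_def ket_zeros_def by (rule kron_carrier) auto
  moreover have "(2::nat) ^ d2 * 2 ^ (d1 - d2) = 2 ^ d1"
    using assms by (simp flip: power_add)
  ultimately show ?thesis by simp
qed

theorem theorem12:
  fixes d1 d2 \<eta> :: nat and \<epsilon> :: real
    and Mo Mc :: "complex mat" and k k' :: "bool list" and \<sigma> :: "nat \<Rightarrow> nat"
    and Mo' Mc' Mc'' Ma0 Ma1 U :: "complex mat"
  assumes "d1 \<ge> d2" and "d2 \<ge> 1"
    and "\<epsilon> > 0" and "\<eta> > 0" and "1 / real \<eta> < \<epsilon>"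
    and "density_matrix (2^d1) Mo" and "strictly_pd Mo"
    and "density_matrix (2^d2) Mc"
    and "length k = 2 * d1" and "length k' = 2 * d2"
    and "\<sigma> permutes {..<2^(d1+1)}"
  assumes "Mo' = otp k * Mo * adj (otp k)"
    and "Mc' = otp k' * Mc * adj (otp k')"
    and "Mc'' = embed_iso d1 d2 * Mc' * adj (embed_iso d1 d2)"
    and "Ma0 = four_block_mat ((1/2) \<cdot>\<^sub>m Mo') (0\<^sub>m (2^d1) (2^d1))
                              (0\<^sub>m (2^d1) (2^d1)) ((1/2) \<cdot>\<^sub>m Mo')"
    and "Ma1 = four_block_mat ((1/2) \<cdot>\<^sub>m Mo') ((1 / of_nat \<eta>) \<cdot>\<^sub>m Mc'')
                              ((1 / of_nat \<eta>) \<cdot>\<^sub>m adj Mc'') ((1/2) \<cdot>\<^sub>m Mo')"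
    and "U = perm_mat (2^(d1+1)) \<sigma>"
  assumes "1 / (real \<eta>)\<^sup>2 * op_norm (Mc'' * mat_inv Mo' * Mc'') \<le> 1/4 * lambda_min Mo'"
  shows "density_matrix (2^(d1+1)) (U * Ma0 * adj U) \<and> density_matrix (2^(d1+1)) (U * Ma1 * adj U)"
proof -
  define n where "n = (2::nat) ^ d1"
  have n: "n > 0" "2 ^ (d1 + 1) = n + n" unfolding n_def by simp_all
  have Mo: "Mo \<in> carrier_mat n n" using assms(6) unfolding density_matrix_def n_def by simp
  have P: "unitary n (otp k)" unfolding n_def by (rule unitary_otp[OF assms(9)])
  have A: "density_matrix n Mo'"
    unfolding assms(12) by (rule density_matrix_unitary_conj[OF P]) (use assms(6) n_def in simp)
  have "strictly_pd Mo'" unfolding assms(12) by (rule strictly_pd_unitary_conj[OF P assms(7) Mo])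
  have "hermitian Mc'" "Mc' \<in> carrier_mat (2 ^ d2) (2 ^ d2)"
    using assms(8,10,13) unitary_otp[of k' d2] hermitian_conj conj_carrier_mat
    unfolding density_matrix_def unitary_def by auto
  then have C: "hermitian Mc''" "Mc'' \<in> carrier_mat n n"
    using assms(14) embed_iso_carrier[OF assms(1)] hermitian_conj conj_carrier_mat
    unfolding n_def by auto
  have "density_matrix (n + n) Ma0"
    using density_matrix_four_block_half_zero[OF A] unfolding assms(15) n_def .
  moreover have "(1 / real \<eta>)\<^sup>2 * op_norm (Mc'' * mat_inv Mo' * Mc'') \<le> lambda_min Mo' / 4"
    using assms(18) by (simp add: power_divide)
  then have "density_matrix (n + n) Ma1"
    using density_matrix_four_block_half_hermitian[OF A \<open>strictly_pd Mo'\<close> n(1) C, of "1 / real \<eta>"]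
    unfolding assms(16) hermitian_adj[OF C(1)] by simp
  ultimately show ?thesis
    using density_matrix_unitary_conj unitary_perm_mat[OF assms(11)] assms(17) n(2) by simp
qed

end
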